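(* Let $n\ge 2$ and $0<r<1$, and let \[\mathcal{S}_r = \left\{\lambda\begin{pmatrix} 1 & x^*\\ y & yx^*\end{pmatrix} : x,y\in\mathbb{C}^{n-1},\ \|x\|<r,\ \|y\|<r,\ \lambda\in\mathbb{C}\right\}\subseteq\mathcal{M}_n(\mathbb{C}).\] Then $\mathcal{S}_r$ is a semigroup and it is $\frac{4r^2}{(1-r^2)^2}$-submultiplicative.
   Context: Here $\|\cdot\|$ is the Euclidean norm, $x^*$ is the conjugate transpose of a column vector, $\sigma(M)$ is the spectrum and $\rho(M)$ the spectral radius of a matrix $M$. A semigroup $\mathcal{S}\subseteq\mathcal{M}_n(\mathbb{C})$ is called $\varepsilon$-submultiplicative if for all $A,B\in\mathcal{S}$ and every $\gamma\in\sigma(AB)$ there exist $\alpha\in\sigma(A)$ and $\beta\in\sigma(B)$ such that $|\gamma-\alpha\beta|\le\varepsilon\,\rho(A)\rho(B)$. *)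

theory Defs
  imports "Jordan_Normal_Form.Spectral_Radius"
begin

definition vnorm :: "complex vec \<Rightarrow> real" where
  "vnorm x = sqrt (\<Sum>i<dim_vec x. (cmod (x $ i))\<^sup>2)"

definition blockM :: "nat \<Rightarrow> complex vec \<Rightarrow> complex vec \<Rightarrow> complex mat" where
  "blockM n x y = mat n n (\<lambda>(i, j).
     if i = 0 \<and> j = 0 then 1
     else if i = 0 then cnj (x $ (j - 1))
     else if j = 0 then y $ (i - 1)
     else y $ (i - 1) * cnj (x $ (j - 1)))"

definition S_r :: "nat \<Rightarrow> real \<Rightarrow> complex mat set" where
  "S_r n r = {c \<cdot>\<^sub>m blockM n x y | c x y.
     x \<in> carrier_vec (n - 1) \<and> y \<in> carrier_vec (n - 1) \<and> vnorm x < r \<and> vnorm y < r}"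

definition is_semigroup :: "nat \<Rightarrow> complex mat set \<Rightarrow> bool" where
  "is_semigroup n S \<longleftrightarrow> S \<subseteq> carrier_mat n n \<and> (\<forall>A\<in>S. \<forall>B\<in>S. A * B \<in> S)"

definition eps_submultiplicative :: "real \<Rightarrow> complex mat set \<Rightarrow> bool" where
  "eps_submultiplicative \<epsilon> S \<longleftrightarrow>
     (\<forall>A\<in>S. \<forall>B\<in>S. \<forall>\<gamma>\<in>spectrum (A * B). \<exists>\<alpha>\<in>spectrum A. \<exists>\<beta>\<in>spectrum B.
        cmod (\<gamma> - \<alpha> * \<beta>) \<le> \<epsilon> * spectral_radius A * spectral_radius B)"

end

theory Submission
  imports Defs
begin

text \<open>
  Write \<open>u = (1, y)\<close> and \<open>w = (1, x)\<close>. Every element of \<open>S_r\<close> is a rank-one matrix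
  \<open>\<lambda> u w\<^sup>*\<close>, and \<open>(\<lambda> u w\<^sup>*) (\<lambda>' u' w'\<^sup>*) = \<lambda> \<lambda>' \<langle>w, u'\<rangle> u w'\<^sup>*\<close>, so \<open>S_r\<close> is a semigroup.
  For \<open>n \<ge> 2\<close> the spectrum of \<open>\<lambda> u w\<^sup>*\<close> is \<open>{0, \<lambda> \<langle>w, u\<rangle>}\<close>, so the only nontrivial comparison
  is between \<open>\<lambda> \<lambda>' \<langle>w, u'\<rangle> \<langle>w', u\<rangle>\<close> and \<open>\<lambda> \<lambda>' \<langle>w, u\<rangle> \<langle>w', u'\<rangle>\<close>. Their difference is a
  Binet--Cauchy determinant, bounded by the product of the Gram determinants of \<open>w, w'\<close> and of
  \<open>u, u'\<close>; as these vectors share the first coordinate 1, each Gram determinant is at most \<open>4 r\<^sup>2\<close>.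
  On the other hand \<open>|\<langle>w, u\<rangle>| = |1 + \<langle>x, y\<rangle>| \<ge> 1 - r\<^sup>2\<close>, and \<open>|\<lambda> \<langle>w, u\<rangle>|\<close> is the spectral radius.
\<close>

definition cinner :: "'i set \<Rightarrow> ('i \<Rightarrow> complex) \<Rightarrow> ('i \<Rightarrow> complex) \<Rightarrow> complex" where
  "cinner I u v = (\<Sum>k\<in>I. cnj (u k) * v k)"

definition sqnorm :: "'i set \<Rightarrow> ('i \<Rightarrow> complex) \<Rightarrow> real" where
  "sqnorm I u = (\<Sum>k\<in>I. (cmod (u k))\<^sup>2)"

definition gram :: "'i set \<Rightarrow> ('i \<Rightarrow> complex) \<Rightarrow> ('i \<Rightarrow> complex) \<Rightarrow> real" where
  "gram I u v = sqnorm I u * sqnorm I v - (cmod (cinner I u v))\<^sup>2"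

lemma cinner_self: "cinner I u u = of_real (sqnorm I u)"
  unfolding cinner_def sqnorm_def of_real_sum
  by (intro sum.cong refl) (simp only: complex_norm_square mult.commute)

lemma lagrange_identity:
  fixes a b c d :: "'i \<Rightarrow> complex"
  shows "2 * ((\<Sum>i\<in>I. a i * c i) * (\<Sum>i\<in>I. b i * d i) - (\<Sum>i\<in>I. a i * d i) * (\<Sum>i\<in>I. b i * c i))
    = (\<Sum>i\<in>I. \<Sum>j\<in>I. (a i * b j - a j * b i) * (c i * d j - c j * d i))"
proof -
  define P where "P i j = a i * c i * (b j * d j)" for i j
  define Q where "Q i j = a i * d i * (b j * c j)" for i j
  have expand: "(a i * b j - a j * b i) * (c i * d j - c j * d i) = P i j - Q i j - Q j i + P j i" for i j
    unfolding P_def Q_def by (simp add: algebra_simps)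
  have "(\<Sum>i\<in>I. a i * c i) * (\<Sum>i\<in>I. b i * d i) = (\<Sum>i\<in>I. \<Sum>j\<in>I. P i j)"
    and "(\<Sum>i\<in>I. a i * d i) * (\<Sum>i\<in>I. b i * c i) = (\<Sum>i\<in>I. \<Sum>j\<in>I. Q i j)"
    unfolding P_def Q_def by (simp_all add: sum_product)
  moreover have "(\<Sum>i\<in>I. \<Sum>j\<in>I. P j i) = (\<Sum>i\<in>I. \<Sum>j\<in>I. P i j)"
    and "(\<Sum>i\<in>I. \<Sum>j\<in>I. Q j i) = (\<Sum>i\<in>I. \<Sum>j\<in>I. Q i j)"
    by (rule sum.swap)+
  ultimately show ?thesis
    unfolding expand by (simp add: sum.distrib sum_subtractf)
qed

lemma sum_cross_sq_eq_gram:
  "(\<Sum>i\<in>I. \<Sum>j\<in>I. (cmod (u i * v j - u j * v i))\<^sup>2) = 2 * gram I u v"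
proof -
  have "complex_of_real (\<Sum>i\<in>I. \<Sum>j\<in>I. (cmod (u i * v j - u j * v i))\<^sup>2)
     = (\<Sum>i\<in>I. \<Sum>j\<in>I. (cnj (u i) * cnj (v j) - cnj (u j) * cnj (v i)) * (u i * v j - u j * v i))"
    unfolding of_real_sum by (intro sum.cong refl) (simp only: complex_norm_square, simp)
  also have "\<dots> = 2 * (cinner I u u * cinner I v v - cinner I u v * cinner I v u)"
    unfolding cinner_def by (rule lagrange_identity[symmetric])
  also have "cinner I v u = cnj (cinner I u v)"
    unfolding cinner_def by (simp add: mult.commute)
  also have "2 * (cinner I u u * cinner I v v - cinner I u v * cnj (cinner I u v))
      = complex_of_real (2 * gram I u v)"
    unfolding cinner_self gram_def by (simp flip: complex_norm_square)
  finally show ?thesis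
    by (simp only: of_real_eq_iff)
qed

lemma gram_nonneg: "0 \<le> gram I u v"
proof -
  have "0 \<le> (\<Sum>i\<in>I. \<Sum>j\<in>I. (cmod (u i * v j - u j * v i))\<^sup>2)"
    by (intro sum_nonneg) simp
  then show ?thesis
    unfolding sum_cross_sq_eq_gram by simp
qed

lemma cinner_cauchy_schwarz: "(cmod (cinner I u v))\<^sup>2 \<le> sqnorm I u * sqnorm I v"
  using gram_nonneg[where I = I and u = u and v = v] unfolding gram_def by simp

lemma binet_cauchy_bound:
  "(cmod (cinner I a c * cinner I b d - cinner I a d * cinner I b c))\<^sup>2 \<le> gram I a b * gram I c d"
proof -
  define P where "P = (\<lambda>(i, j). a i * b j - a j * b i)"
  define Q where "Q = (\<lambda>(i, j). c i * d j - c j * d i)"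
  have double: "2 * (cinner I a c * cinner I b d - cinner I a d * cinner I b c) = cinner (I \<times> I) P Q"
    unfolding cinner_def lagrange_identity P_def Q_def sum.cartesian_product
    by (intro sum.cong refl) (auto simp: split_def)
  then have "4 * (cmod (cinner I a c * cinner I b d - cinner I a d * cinner I b c))\<^sup>2
      = (cmod (cinner (I \<times> I) P Q))\<^sup>2"
    unfolding double[symmetric] norm_mult by (simp add: power_mult_distrib)
  also have "\<dots> \<le> sqnorm (I \<times> I) P * sqnorm (I \<times> I) Q"
    by (rule cinner_cauchy_schwarz)
  also have "\<dots> = (2 * gram I a b) * (2 * gram I c d)"
    unfolding sum_cross_sq_eq_gram[symmetric] sqnorm_def P_def Q_def
    by (simp add: sum.cartesian_product')
  finally show ?thesis by simp
qed

definition aug :: "complex vec \<Rightarrow> nat \<Rightarrow> complex" where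
  "aug x i = (if i = 0 then 1 else x $ (i - 1))"

lemma cinner_aug: "cinner {..<Suc m} (aug x) (aug y) = 1 + cinner {..<m} (($) x) (($) y)"
  unfolding cinner_def sum.lessThan_Suc_shift by (simp add: aug_def)

lemma sqnorm_aug: "sqnorm {..<Suc m} (aug x) = 1 + sqnorm {..<m} (($) x)"
  unfolding sqnorm_def sum.lessThan_Suc_shift by (simp add: aug_def)

lemma vnorm_nonneg: "0 \<le> vnorm x"
  unfolding vnorm_def by (simp add: sum_nonneg)

lemma sqnorm_vec_nth: "x \<in> carrier_vec m \<Longrightarrow> sqnorm {..<m} (($) x) = (vnorm x)\<^sup>2"
  unfolding vnorm_def sqnorm_def by (simp add: sum_nonneg)

lemma cmod_cinner_le_vnorm:
  assumes "x \<in> carrier_vec m" "y \<in> carrier_vec m"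
  shows "cmod (cinner {..<m} (($) x) (($) y)) \<le> vnorm x * vnorm y"
proof (rule power2_le_imp_le)
  show "(cmod (cinner {..<m} (($) x) (($) y)))\<^sup>2 \<le> (vnorm x * vnorm y)\<^sup>2"
    using cinner_cauchy_schwarz
    unfolding power_mult_distrib sqnorm_vec_nth[OF assms(1), symmetric] sqnorm_vec_nth[OF assms(2), symmetric] .
qed (simp add: vnorm_nonneg)

lemma cmod_cinner_aug_ge:
  assumes "x \<in> carrier_vec m" "y \<in> carrier_vec m"
  shows "1 - vnorm x * vnorm y \<le> cmod (cinner {..<Suc m} (aug x) (aug y))"
  using cmod_cinner_le_vnorm[OF assms] norm_triangle_ineq2[of 1 "- cinner {..<m} (($) x) (($) y)"]
  unfolding cinner_aug by simp

lemma gram_aug_le: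
  assumes "x \<in> carrier_vec m" "y \<in> carrier_vec m"
    and "vnorm x \<le> r" "vnorm y \<le> r" "r \<le> 1"
  shows "gram {..<Suc m} (aug x) (aug y) \<le> 4 * r\<^sup>2"
proof -
  let ?\<alpha> = "vnorm x" and ?\<beta> = "vnorm y"
  have "?\<alpha> * ?\<beta> \<le> 1"
    using assms vnorm_nonneg[of x] vnorm_nonneg[of y] by (intro mult_le_one) auto
  then have "(1 - ?\<alpha> * ?\<beta>)\<^sup>2 \<le> (cmod (cinner {..<Suc m} (aug x) (aug y)))\<^sup>2"
    using cmod_cinner_aug_ge[OF assms(1,2)] by (intro power_mono) auto
  then have "gram {..<Suc m} (aug x) (aug y) \<le> (1 + ?\<alpha>\<^sup>2) * (1 + ?\<beta>\<^sup>2) - (1 - ?\<alpha> * ?\<beta>)\<^sup>2"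
    unfolding gram_def sqnorm_aug sqnorm_vec_nth[OF assms(1)] sqnorm_vec_nth[OF assms(2)] by simp
  also have "\<dots> = (?\<alpha> + ?\<beta>)\<^sup>2"
    by (simp add: power2_eq_square algebra_simps)
  also have "\<dots> \<le> (2 * r)\<^sup>2"
    using assms vnorm_nonneg[of x] vnorm_nonneg[of y] by (intro power_mono) auto
  finally show ?thesis by simp
qed

lemma one_minus_sq_le_cmod_cinner_aug:
  assumes "x \<in> carrier_vec m" "y \<in> carrier_vec m" "vnorm x \<le> r" "vnorm y \<le> r"
  shows "1 - r\<^sup>2 \<le> cmod (cinner {..<Suc m} (aug x) (aug y))"
proof -
  have "vnorm x * vnorm y \<le> r * r"
    using assms vnorm_nonneg[of x] vnorm_nonneg[of y] by (intro mult_mono) auto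
  then show ?thesis
    using cmod_cinner_aug_ge[OF assms(1,2)] unfolding power2_eq_square by linarith
qed

lemma cmod_cinner_aug_exchange_le:
  assumes "x \<in> carrier_vec m" "y \<in> carrier_vec m" "x' \<in> carrier_vec m" "y' \<in> carrier_vec m"
    and "vnorm x \<le> r" "vnorm y \<le> r" "vnorm x' \<le> r" "vnorm y' \<le> r" "r \<le> 1"
  defines "t u v \<equiv> cinner {..<Suc m} (aug u) (aug v)"
  shows "cmod (t x y' * t x' y - t x y * t x' y') \<le> 4 * r\<^sup>2"
proof (rule power2_le_imp_le)
  have "cmod (t x y' * t x' y - t x y * t x' y') = cmod (t x y * t x' y' - t x y' * t x' y)"
    by (rule norm_minus_commute)
  then have "(cmod (t x y' * t x' y - t x y * t x' y'))\<^sup>2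
      \<le> gram {..<Suc m} (aug x) (aug x') * gram {..<Suc m} (aug y) (aug y')"
    unfolding t_def using binet_cauchy_bound by simp
  also have "\<dots> \<le> 4 * r\<^sup>2 * (4 * r\<^sup>2)"
    using assms gram_nonneg by (intro mult_mono gram_aug_le) auto
  finally show "(cmod (t x y' * t x' y - t x y * t x' y'))\<^sup>2 \<le> (4 * r\<^sup>2)\<^sup>2"
    by (simp only: power2_eq_square)
qed simp

lemma cinner_aug_exchange_le:
  assumes carrier: "x \<in> carrier_vec m" "y \<in> carrier_vec m" "x' \<in> carrier_vec m" "y' \<in> carrier_vec m"
    and norms: "vnorm x < r" "vnorm y < r" "vnorm x' < r" "vnorm y' < r"
    and "r < 1"
  defines "t u v \<equiv> cinner {..<Suc m} (aug u) (aug v)"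
  shows "cmod (t x y' * t x' y - t x y * t x' y') \<le> 4 * r\<^sup>2 / (1 - r\<^sup>2)\<^sup>2 * (cmod (t x y) * cmod (t x' y'))"
proof -
  have r: "0 \<le> r" "r \<le> 1"
    using norms \<open>r < 1\<close> vnorm_nonneg[of x] by auto
  then have pos: "0 < 1 - r\<^sup>2"
    using \<open>r < 1\<close> by (simp add: power_less_one_iff)
  have "(1 - r\<^sup>2)\<^sup>2 \<le> cmod (t x y) * cmod (t x' y')"
    unfolding power2_eq_square[of "1 - r\<^sup>2"] t_def
    using carrier norms pos by (intro mult_mono one_minus_sq_le_cmod_cinner_aug) auto
  then have "4 * r\<^sup>2 / (1 - r\<^sup>2)\<^sup>2 * (1 - r\<^sup>2)\<^sup>2
      \<le> 4 * r\<^sup>2 / (1 - r\<^sup>2)\<^sup>2 * (cmod (t x y) * cmod (t x' y'))"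
    by (rule mult_left_mono) simp
  moreover have "cmod (t x y' * t x' y - t x y * t x' y') \<le> 4 * r\<^sup>2"
    unfolding t_def using carrier norms r by (intro cmod_cinner_aug_exchange_le) auto
  ultimately show ?thesis
    using pos by simp
qed

definition rank_one_mat :: "nat \<Rightarrow> complex \<Rightarrow> (nat \<Rightarrow> complex) \<Rightarrow> (nat \<Rightarrow> complex) \<Rightarrow> complex mat" where
  "rank_one_mat n c u w = mat n n (\<lambda>(i, j). c * u i * cnj (w j))"

lemma rank_one_mat_carrier [simp]: "rank_one_mat n c u w \<in> carrier_mat n n"
  and dim_rank_one_mat [simp]: "dim_row (rank_one_mat n c u w) = n" "dim_col (rank_one_mat n c u w) = n"
  unfolding rank_one_mat_def by simp_all

lemma rank_one_mat_mult:
  "rank_one_mat n c u w * rank_one_mat n c' u' w' = rank_one_mat n (c * c' * cinner {..<n} w u') u w'"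
  by (rule eq_matI) (auto simp: rank_one_mat_def cinner_def scalar_prod_def sum_distrib_left
      sum_distrib_right lessThan_atLeast0 mult_ac intro!: sum.cong)

lemma rank_one_mat_mult_vec:
  assumes "v \<in> carrier_vec n"
  shows "rank_one_mat n c u w *\<^sub>v v = (c * cinner {..<n} w (($) v)) \<cdot>\<^sub>v vec n u"
  using assms
  by (intro eq_vecI) (auto simp: rank_one_mat_def cinner_def scalar_prod_def sum_distrib_left
      lessThan_atLeast0 mult_ac intro!: sum.cong)

lemma spectrum_rank_one_mat_subset:
  "spectrum (rank_one_mat n c u w) \<subseteq> {0, c * cinner {..<n} w u}"
proof
  fix k assume "k \<in> spectrum (rank_one_mat n c u w)"
  then obtain v where v: "v \<in> carrier_vec n" "v \<noteq> 0\<^sub>v n" and "rank_one_mat n c u w *\<^sub>v v = k \<cdot>\<^sub>v v"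
    unfolding spectrum_def eigenvalue_def eigenvector_def by auto
  then have eigen: "(c * cinner {..<n} w (($) v)) \<cdot>\<^sub>v vec n u = k \<cdot>\<^sub>v v"
    by (simp add: rank_one_mat_mult_vec)
  show "k \<in> {0, c * cinner {..<n} w u}"
  proof (rule ccontr)
    assume k: "k \<notin> {0, c * cinner {..<n} w u}"
    define s where "s = c * cinner {..<n} w (($) v) / k"
    have v_eq: "v $ i = s * u i" if "i < n" for i
      using arg_cong[OF eigen, of "\<lambda>v. v $ i"] that k v(1) unfolding s_def by (auto simp: field_simps)
    have "cinner {..<n} w (($) v) = s * cinner {..<n} w u"
      unfolding cinner_def sum_distrib_left by (intro sum.cong) (auto simp: v_eq)
    then have "s * k = s * (c * cinner {..<n} w u)"
      using k unfolding s_def by (simp add: field_simps)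
    then have "s = 0"
      using k by simp
    then have "v = 0\<^sub>v n"
      using v(1) v_eq by (intro eq_vecI) auto
    with v(2) show False ..
  qed
qed

lemma mem_spectrum_rank_one_mat:
  assumes "i < n" "u i \<noteq> 0"
  shows "c * cinner {..<n} w u \<in> spectrum (rank_one_mat n c u w)"
proof -
  have "vec n u \<noteq> 0\<^sub>v n"
    using assms by (metis index_vec index_zero_vec(1))
  then show ?thesis
    unfolding spectrum_def eigenvalue_def eigenvector_def
    by (intro CollectI exI[of _ "vec n u"]) (simp add: rank_one_mat_mult_vec cinner_def)
qed

lemma zero_mem_spectrum_rank_one_mat:
  assumes "2 \<le> n"
  shows "0 \<in> spectrum (rank_one_mat n c u w)"
proof -
  have "\<exists>v \<in> carrier_vec n. v \<noteq> 0\<^sub>v n \<and> cinner {..<n} w (($) v) = 0"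
  proof (cases "w 0 = 0")
    case True
    then show ?thesis
      using assms
      by (intro bexI[of _ "unit_vec n 0"]) (auto simp: cinner_def vec_eq_iff)
  next
    case False
    let ?v = "vec n (\<lambda>i. if i = 0 then cnj (w 1) else if i = 1 then - cnj (w 0) else 0)"
    have "cinner {..<n} w (($) ?v) = cinner {..<2} w (($) ?v)"
      unfolding cinner_def using assms by (intro sum.mono_neutral_right) auto
    also have "\<dots> = 0"
      using assms by (simp add: cinner_def numeral_2_eq_2)
    finally show ?thesis
      using assms False by (intro bexI[of _ ?v]) (auto simp: vec_eq_iff)
  qed
  then obtain v where "v \<in> carrier_vec n" "v \<noteq> 0\<^sub>v n" "cinner {..<n} w (($) v) = 0"
    by blast
  then show ?thesis
    unfolding spectrum_def eigenvalue_def eigenvector_def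
    by (intro CollectI exI[of _ v]) (auto simp: rank_one_mat_mult_vec vec_eq_iff)
qed

lemma norm_le_spectral_radius:
  assumes "A \<in> carrier_mat n n" "k \<in> spectrum A"
  shows "cmod k \<le> spectral_radius A"
  using assms eigenvalue_imp_nonzero_dim[OF assms(1)]
  by (intro spectral_radius_mem_max(2)) (auto simp: spectrum_def)

lemma rank_one_mat_submultiplicative:
  fixes n :: nat and c c' :: complex and u w u' w' :: "nat \<Rightarrow> complex" and \<epsilon> :: real
  defines "A \<equiv> rank_one_mat n c u w" and "B \<equiv> rank_one_mat n c' u' w'"
  assumes "2 \<le> n" "u 0 \<noteq> 0" "u' 0 \<noteq> 0" "0 \<le> \<epsilon>"
    and exchange: "cmod (cinner {..<n} w u' * cinner {..<n} w' u - cinner {..<n} w u * cinner {..<n} w' u')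
      \<le> \<epsilon> * (cmod (cinner {..<n} w u) * cmod (cinner {..<n} w' u'))"
    and \<gamma>: "\<gamma> \<in> spectrum (A * B)"
  shows "\<exists>\<alpha>\<in>spectrum A. \<exists>\<beta>\<in>spectrum B. cmod (\<gamma> - \<alpha> * \<beta>) \<le> \<epsilon> * spectral_radius A * spectral_radius B"
proof -
  define \<alpha> where "\<alpha> = c * cinner {..<n} w u"
  define \<beta> where "\<beta> = c' * cinner {..<n} w' u'"
  have \<alpha>: "\<alpha> \<in> spectrum A" and \<beta>: "\<beta> \<in> spectrum B"
    unfolding A_def B_def \<alpha>_def \<beta>_def using assms by (auto intro: mem_spectrum_rank_one_mat[of 0])
  have \<rho>: "cmod \<alpha> \<le> spectral_radius A" "cmod \<beta> \<le> spectral_radius B"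
    using norm_le_spectral_radius[OF _ \<alpha>, of n] norm_le_spectral_radius[OF _ \<beta>, of n]
    by (simp_all add: A_def B_def)
  then have \<rho>_nonneg: "0 \<le> spectral_radius A" "0 \<le> spectral_radius B"
    by (auto intro: order_trans[OF norm_ge_zero])
  have "\<gamma> \<in> {0, c * c' * cinner {..<n} w u' * cinner {..<n} w' u}"
    using \<gamma> spectrum_rank_one_mat_subset unfolding A_def B_def rank_one_mat_mult by blast
  then show ?thesis
  proof
    assume "\<gamma> = 0"
    moreover have "0 \<in> spectrum A" "0 \<in> spectrum B"
      unfolding A_def B_def using assms by (auto intro: zero_mem_spectrum_rank_one_mat)
    ultimately show ?thesis
      using \<rho>_nonneg \<open>0 \<le> \<epsilon>\<close> by (intro bexI[of _ 0]) auto
  next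
    assume "\<gamma> \<in> {c * c' * cinner {..<n} w u' * cinner {..<n} w' u}"
    then have "cmod (\<gamma> - \<alpha> * \<beta>) = cmod c * cmod c'
        * cmod (cinner {..<n} w u' * cinner {..<n} w' u - cinner {..<n} w u * cinner {..<n} w' u')"
      unfolding \<alpha>_def \<beta>_def by (simp add: norm_mult[symmetric] algebra_simps)
    also have "\<dots> \<le> cmod c * cmod c' * (\<epsilon> * (cmod (cinner {..<n} w u) * cmod (cinner {..<n} w' u')))"
      using exchange by (intro mult_left_mono) auto
    also have "\<dots> = \<epsilon> * cmod \<alpha> * cmod \<beta>"
      unfolding \<alpha>_def \<beta>_def by (simp add: norm_mult)
    also have "\<dots> \<le> \<epsilon> * spectral_radius A * spectral_radius B"
      using \<rho> \<rho>_nonneg \<open>0 \<le> \<epsilon>\<close> by (intro mult_mono mult_left_mono) auto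
    finally show ?thesis
      using \<alpha> \<beta> by blast
  qed
qed

lemma smult_blockM: "c \<cdot>\<^sub>m blockM n x y = rank_one_mat n c (aug y) (aug x)"
  by (rule eq_matI) (auto simp: blockM_def rank_one_mat_def aug_def)

lemma S_r_Suc_eq:
  "S_r (Suc m) r = {rank_one_mat (Suc m) c (aug y) (aug x) | c x y.
     x \<in> carrier_vec m \<and> y \<in> carrier_vec m \<and> vnorm x < r \<and> vnorm y < r}"
  unfolding S_r_def smult_blockM by simp

theorem mainTheorem5:
  fixes n :: nat and r :: real
  assumes "n \<ge> 2" and "0 < r" and "r < 1"
  shows "is_semigroup n (S_r n r) \<and>
         eps_submultiplicative (4 * r\<^sup>2 / (1 - r\<^sup>2)\<^sup>2) (S_r n r)"
proof -
  obtain m where n: "n = Suc m"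
    using assms(1) by (cases n) auto
  have "A * B \<in> S_r n r" if "A \<in> S_r n r" "B \<in> S_r n r" for A B
    using that unfolding n S_r_Suc_eq by (clarsimp simp: rank_one_mat_mult) blast
  then have "is_semigroup n (S_r n r)"
    unfolding is_semigroup_def n S_r_Suc_eq by auto
  moreover have "eps_submultiplicative (4 * r\<^sup>2 / (1 - r\<^sup>2)\<^sup>2) (S_r n r)"
    unfolding eps_submultiplicative_def n S_r_Suc_eq
    by (clarify, intro rank_one_mat_submultiplicative cinner_aug_exchange_le)
      (use assms n in \<open>auto simp: aug_def\<close>)
  ultimately show ?thesis ..
qed

end
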